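(* Let $F:\mathcal{P}(V,A)\to S_2(A)$ be a consular election rule satisfying SPO and SPP. Let $P$ be a profile, $i$ a voter, $W=F(P)$, $t=\mathrm{best}(P_i,W)$, $s=\mathrm{worst}(P_i,W)$, and let $W'=F(P^{i\uparrow s})$. Then (1) $\mathrm{best}(P_i^{\uparrow s},W')\in\{t,s\}$, and (2) $\mathrm{worst}(P_i^{\uparrow s},W')\in\{s,t\}$.
   Context: $V$ is a finite nonempty set of voters, $A$ a finite set of alternatives; a profile $P$ assigns to each voter $i$ a linear order $P_i$ on $A$ (strict part $\succ_i$, weak part $\succeq_i$); $P_i'P_{-i}$ replaces voter $i$'s order by $P_i'$. $S_2(A)$ is the set of 2-element subsets of $A$; a consular election rule is a map $F:\mathcal{P}(V,A)\to S_2(A)$. $\mathrm{best}(P_i,W)$, $\mathrm{worst}(P_i,W)$ are the $P_i$-best and $P_i$-worst elements of $W$. SPO: for all $P$, $i$, $P_i'$, $\mathrm{best}(P_i,F(P))\succeq_i\mathrm{best}(P_i,F(P_i'P_{-i}))$; SPP: same with $\mathrm{worst}$. $P_i^{\uparrow s}$ is the linear order obtained from $P_i$ by swapping $s$ with the alternative directly above it (no change if $s$ is already ranked first), and $P^{i\uparrow s}$ is the profile obtained from $P$ by replacing $P_i$ with $P_i^{\uparrow s}$. *)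

theory Defs
  imports Main
begin

text \<open>A linear order on A is a relation R :: 'a rel with linear_order_on A R;
  (x, y) \<in> R means x \<succeq> y (x is weakly preferred to y).\<close>

definition profile :: "'v set \<Rightarrow> 'a set \<Rightarrow> ('v \<Rightarrow> 'a rel) \<Rightarrow> bool" where
  "profile V A P \<longleftrightarrow> (\<forall>i\<in>V. linear_order_on A (P i)) \<and> (\<forall>i. i \<notin> V \<longrightarrow> P i = {})"

definition S2 :: "'a set \<Rightarrow> 'a set set" where
  "S2 A = {W. W \<subseteq> A \<and> card W = 2}"

definition consular_rule :: "'v set \<Rightarrow> 'a set \<Rightarrow> (('v \<Rightarrow> 'a rel) \<Rightarrow> 'a set) \<Rightarrow> bool" where
  "consular_rule V A F \<longleftrightarrow> (\<forall>P. profile V A P \<longrightarrow> F P \<in> S2 A)"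

definition best :: "'a rel \<Rightarrow> 'a set \<Rightarrow> 'a" where
  "best R W = (THE x. x \<in> W \<and> (\<forall>y\<in>W. (x, y) \<in> R))"

definition worst :: "'a rel \<Rightarrow> 'a set \<Rightarrow> 'a" where
  "worst R W = (THE x. x \<in> W \<and> (\<forall>y\<in>W. (y, x) \<in> R))"

definition SPO :: "'v set \<Rightarrow> 'a set \<Rightarrow> (('v \<Rightarrow> 'a rel) \<Rightarrow> 'a set) \<Rightarrow> bool" where
  "SPO V A F \<longleftrightarrow> (\<forall>P i R'. profile V A P \<longrightarrow> i \<in> V \<longrightarrow> linear_order_on A R' \<longrightarrow>
      (best (P i) (F P), best (P i) (F (P(i := R')))) \<in> P i)"

definition SPP :: "'v set \<Rightarrow> 'a set \<Rightarrow> (('v \<Rightarrow> 'a rel) \<Rightarrow> 'a set) \<Rightarrow> bool" where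
  "SPP V A F \<longleftrightarrow> (\<forall>P i R'. profile V A P \<longrightarrow> i \<in> V \<longrightarrow> linear_order_on A R' \<longrightarrow>
      (worst (P i) (F P), worst (P i) (F (P(i := R')))) \<in> P i)"

definition directly_above :: "'a rel \<Rightarrow> 'a \<Rightarrow> 'a \<Rightarrow> bool" where
  "directly_above R s u \<longleftrightarrow> (u, s) \<in> R \<and> u \<noteq> s \<and>
     (\<forall>w. (u, w) \<in> R \<and> (w, s) \<in> R \<longrightarrow> w = u \<or> w = s)"

definition swp :: "'a \<Rightarrow> 'a \<Rightarrow> 'a \<Rightarrow> 'a" where
  "swp a b x = (if x = a then b else if x = b then a else x)"

definition swap_up :: "'a rel \<Rightarrow> 'a \<Rightarrow> 'a rel" where
  "swap_up R s = (if \<exists>u. directly_above R s u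
     then (let u = (THE u. directly_above R s u) in map_prod (swp s u) (swp s u) ` R)
     else R)"

definition profile_up :: "('v \<Rightarrow> 'a rel) \<Rightarrow> 'v \<Rightarrow> 'a \<Rightarrow> ('v \<Rightarrow> 'a rel)" where
  "profile_up P i s = P(i := swap_up (P i) s)"

end

theory Submission
  imports Defs
begin

text \<open>In fact the outcome does not change: \<open>W' = W = {t, s}\<close>. Strategy-proofness is applied
  at \<open>P\<close>, with voter \<open>i\<close> misreporting the swapped order, and at \<open>P\<^sup>i\<^sup>\<up>\<^sup>s\<close>, with voter
  \<open>i\<close> misreporting \<open>P\<^sub>i\<close>, each time for the best and for the worst member. At \<open>P\<close> this
  bounds the members of \<open>W'\<close> by \<open>t\<close> from above and by \<open>s\<close> from below; at \<open>P\<^sup>i\<^sup>\<up>\<^sup>s\<close> it gives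
  the analogous bounds in the swapped order. Since the swap only exchanges \<open>s\<close> with its
  immediate predecessor \<open>u\<close>, these bounds leave no room for members other than \<open>t\<close> and \<open>s\<close>;
  the cases are that \<open>u\<close> does not exist, that \<open>u = t\<close>, and that \<open>u\<close> lies strictly between.\<close>

lemma linear_order_on_subset: "linear_order_on A R \<Longrightarrow> R \<subseteq> A \<times> A"
  by (simp add: linear_order_on_def partial_order_on_def preorder_on_def refl_on_def)

lemma linear_order_on_refl: "linear_order_on A R \<Longrightarrow> x \<in> A \<Longrightarrow> (x, x) \<in> R"
  by (simp add: linear_order_on_def partial_order_on_def preorder_on_def refl_on_def)

lemma linear_order_on_trans: "linear_order_on A R \<Longrightarrow> (x, y) \<in> R \<Longrightarrow> (y, z) \<in> R \<Longrightarrow> (x, z) \<in> R"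
  unfolding linear_order_on_def partial_order_on_def preorder_on_def by (blast dest: transD)

lemma linear_order_on_antisym: "linear_order_on A R \<Longrightarrow> (x, y) \<in> R \<Longrightarrow> (y, x) \<in> R \<Longrightarrow> x = y"
  unfolding linear_order_on_def partial_order_on_def antisym_on_def by blast

lemma linear_order_on_total:
  "linear_order_on A R \<Longrightarrow> x \<in> A \<Longrightarrow> y \<in> A \<Longrightarrow> (x, y) \<in> R \<or> (y, x) \<in> R"
  using linear_order_on_refl[of A R x] by (cases "x = y") (auto simp: linear_order_on_def total_on_def)

lemma best_eqI:
  assumes "linear_order_on A R" "x \<in> W" "\<And>y. y \<in> W \<Longrightarrow> (x, y) \<in> R"
  shows "best R W = x"
  unfolding best_def
proof (rule the_equality)
  fix y assume "y \<in> W \<and> (\<forall>z\<in>W. (y, z) \<in> R)"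
  then show "y = x"
    using assms linear_order_on_antisym[OF assms(1), of x y] by blast
qed (use assms in blast)

lemma worst_eq_best_converse: "worst R W = best (R\<inverse>) W"
  by (simp add: worst_def best_def)

lemma ex_best:
  assumes "linear_order_on A R" "finite W" "W \<noteq> {}" "W \<subseteq> A"
  shows "\<exists>x\<in>W. \<forall>y\<in>W. (x, y) \<in> R"
  using assms(2-4)
proof (induction W rule: finite_ne_induct)
  case (singleton x)
  then show ?case using linear_order_on_refl[OF assms(1)] by simp
next
  case (insert x W)
  then obtain m where m: "m \<in> W" "\<forall>y\<in>W. (m, y) \<in> R" by auto
  show ?case
  proof (cases "(x, m) \<in> R")
    case True
    then show ?thesis
      using m insert.prems linear_order_on_refl[OF assms(1)] linear_order_on_trans[OF assms(1)] by blast
  next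
    case False
    then show ?thesis
      using m insert.prems linear_order_on_total[OF assms(1), of x m] by auto
  qed
qed

lemma best_in_le:
  assumes "linear_order_on A R" "finite W" "W \<noteq> {}" "W \<subseteq> A"
  shows "best R W \<in> W" "y \<in> W \<Longrightarrow> (best R W, y) \<in> R"
  using ex_best[OF assms] best_eqI[OF assms(1)] by metis+

lemma worst_in_ge:
  assumes "linear_order_on A R" "finite W" "W \<noteq> {}" "W \<subseteq> A"
  shows "worst R W \<in> W" "y \<in> W \<Longrightarrow> (y, worst R W) \<in> R"
  using best_in_le[of A "R\<inverse>" W] assms by (simp_all add: worst_eq_best_converse)

lemma mem_map_prod_involution_iff:
  assumes "\<And>x. f (f x) = x"
  shows "(x, y) \<in> map_prod f f ` R \<longleftrightarrow> (f x, f y) \<in> R"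
proof
  assume "(f x, f y) \<in> R"
  then have "map_prod f f (f x, f y) \<in> map_prod f f ` R" by blast
  then show "(x, y) \<in> map_prod f f ` R" by (simp add: assms)
qed (auto simp: assms)

lemma linear_order_on_map_prod_involution:
  assumes lin: "linear_order_on A R" and inv: "\<And>x. f (f x) = x"
    and closed: "\<And>x. f x \<in> A \<longleftrightarrow> x \<in> A"
  shows "linear_order_on A (map_prod f f ` R)"
  unfolding linear_order_on_def partial_order_on_def preorder_on_def
    refl_on_def total_on_def antisym_on_def trans_def mem_map_prod_involution_iff[of f, OF inv]
proof (intro conjI ballI allI impI)
  show "map_prod f f ` R \<subseteq> A \<times> A"
    using linear_order_on_subset[OF lin] closed by auto
next
  fix x assume "x \<in> A"
  then show "(f x, f x) \<in> R"
    using closed linear_order_on_refl[OF lin] by blast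
next
  fix x y z assume "(f x, f y) \<in> R" "(f y, f z) \<in> R"
  then show "(f x, f z) \<in> R"
    by (rule linear_order_on_trans[OF lin])
next
  fix x y assume "(f x, f y) \<in> R" "(f y, f x) \<in> R"
  then have "f x = f y"
    by (rule linear_order_on_antisym[OF lin])
  then show "x = y"
    by (metis inv)
next
  fix x y assume "x \<in> A" "y \<in> A"
  then show "(f x, f y) \<in> R \<or> (f y, f x) \<in> R"
    using closed linear_order_on_total[OF lin] by blast
qed

lemma swp_swp [simp]: "swp a b (swp a b x) = x"
  unfolding swp_def by auto

lemma directly_above_unique:
  assumes "linear_order_on A R" "directly_above R s u" "directly_above R s v"
  shows "u = v"
  using assms linear_order_on_subset[OF assms(1)] linear_order_on_total[OF assms(1), of u v]
  unfolding directly_above_def by blast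

lemma directly_above_below:
  assumes lin: "linear_order_on A R" and pred: "directly_above R s u" and "(t, s) \<in> R" "t \<noteq> s"
  shows "(t, u) \<in> R"
proof (rule ccontr)
  assume "(t, u) \<notin> R"
  moreover have "t \<in> A" "u \<in> A"
    using assms linear_order_on_subset[OF lin] unfolding directly_above_def by blast+
  ultimately have "(u, t) \<in> R" "t \<noteq> u"
    using linear_order_on_total[OF lin] linear_order_on_refl[OF lin] by blast+
  then show False
    using pred assms(3,4) unfolding directly_above_def by blast
qed

lemma swap_up_eq:
  assumes "linear_order_on A R" "directly_above R s u"
  shows "swap_up R s = map_prod (swp s u) (swp s u) ` R"
proof -
  have "(THE v. directly_above R s v) = u"
    using assms(2) by (rule the_equality) (rule directly_above_unique[OF assms(1) _ assms(2)])
  then show ?thesis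
    using assms(2) by (auto simp: swap_up_def Let_def)
qed

lemma mem_swap_up_iff:
  assumes "linear_order_on A R" "directly_above R s u"
  shows "(x, y) \<in> swap_up R s \<longleftrightarrow> (swp s u x, swp s u y) \<in> R"
  using swap_up_eq[OF assms] mem_map_prod_involution_iff[of "swp s u"] by simp

lemma swap_up_id: "\<not> (\<exists>u. directly_above R s u) \<Longrightarrow> swap_up R s = R"
  by (simp add: swap_up_def)

lemma linear_order_on_swap_up:
  assumes "linear_order_on A R" "s \<in> A"
  shows "linear_order_on A (swap_up R s)"
proof (cases "\<exists>u. directly_above R s u")
  case True
  then obtain u where u: "directly_above R s u" ..
  then have "u \<in> A"
    using linear_order_on_subset[OF assms(1)] unfolding directly_above_def by auto
  then show ?thesis
    using linear_order_on_map_prod_involution[OF assms(1), of "swp s u"] assms(2)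
    by (simp add: swap_up_eq[OF assms(1) u] swp_def)
qed (simp add: swap_up_id assms(1))

lemma worst_eqI:
  assumes "linear_order_on A R" "x \<in> W" "\<And>y. y \<in> W \<Longrightarrow> (y, x) \<in> R"
  shows "worst R W = x"
  using best_eqI[of A "R\<inverse>" x W] assms by (simp add: worst_eq_best_converse)

lemma S2_D:
  assumes "W \<in> S2 A"
  shows "finite W" "W \<noteq> {}" "W \<subseteq> A"
  using assms by (auto simp: S2_def card_2_iff)

lemma S2_eq_doubleton: "W \<in> S2 A \<Longrightarrow> a \<in> W \<Longrightarrow> b \<in> W \<Longrightarrow> a \<noteq> b \<Longrightarrow> W = {a, b}"
  by (auto simp: S2_def card_2_iff)

lemma S2_eq_doubleton_if_subset: "W \<in> S2 A \<Longrightarrow> W \<subseteq> {a, b} \<Longrightarrow> W = {a, b}"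
  by (auto simp: S2_def card_2_iff)

lemma S2_eq_best_worst:
  assumes lin: "linear_order_on A R" and W: "W \<in> S2 A"
  shows "W = {best R W, worst R W}" "best R W \<noteq> worst R W" "(best R W, worst R W) \<in> R"
proof -
  have best: "best R W \<in> W" "\<And>y. y \<in> W \<Longrightarrow> (best R W, y) \<in> R"
    using best_in_le[OF lin S2_D[OF W]] by auto
  have worst: "worst R W \<in> W" "\<And>y. y \<in> W \<Longrightarrow> (y, worst R W) \<in> R"
    using worst_in_ge[OF lin S2_D[OF W]] by auto
  show "(best R W, worst R W) \<in> R"
    using best(2)[OF worst(1)] .
  show ne: "best R W \<noteq> worst R W"
  proof
    assume eq: "best R W = worst R W"
    have "W \<subseteq> {best R W}"
    proof
      fix y assume "y \<in> W"
      then have "(best R W, y) \<in> R" "(y, best R W) \<in> R"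
        using best(2) worst(2) eq by auto
      then show "y \<in> {best R W}"
        using linear_order_on_antisym[OF lin] by auto
    qed
    then show False
      using W by (auto simp: S2_def card_2_iff)
  qed
  show "W = {best R W, worst R W}"
    using S2_eq_doubleton[OF W best(1) worst(1) ne] .
qed

lemma best_worst_doubleton:
  assumes lin: "linear_order_on A R" and "(a, b) \<in> R"
  shows "best R {a, b} = a" "worst R {a, b} = b"
proof -
  have "a \<in> A" "b \<in> A"
    using assms linear_order_on_subset by blast+
  then have "(a, a) \<in> R" "(b, b) \<in> R"
    using linear_order_on_refl[OF lin] by auto
  then show "best R {a, b} = a" "worst R {a, b} = b"
    using best_eqI[OF lin, of a "{a, b}"] worst_eqI[OF lin, of b "{a, b}"] assms(2) by auto
qed

lemma doubleton_eq_if_no_predecessor: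
  assumes lin: "linear_order_on A R" and no_pred: "\<not> (\<exists>u. directly_above R s u)"
    and ts: "(t, s) \<in> R" "t \<noteq> s" and W': "W' \<in> S2 A"
    and top: "\<forall>x\<in>W'. (t, x) \<in> R" and bot: "\<exists>x\<in>W'. (s, x) \<in> R"
    and top': "\<exists>x\<in>W'. (x, best (swap_up R s) {t, s}) \<in> swap_up R s"
    and bot': "\<forall>x\<in>W'. (x, worst (swap_up R s) {t, s}) \<in> swap_up R s"
  shows "W' = {t, s}"
proof -
  note antisym = linear_order_on_antisym[OF lin]
  have R': "swap_up R s = R"
    using no_pred by (rule swap_up_id)
  obtain x where "x \<in> W'" "(x, t) \<in> R"
    using top' best_worst_doubleton[OF lin ts(1)] unfolding R' by auto
  then have "t \<in> W'"
    using top antisym by metis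
  obtain y where "y \<in> W'" "(s, y) \<in> R"
    using bot by blast
  then have "s \<in> W'"
    using bot' best_worst_doubleton[OF lin ts(1)] antisym unfolding R' by metis
  show ?thesis
    using S2_eq_doubleton[OF W' \<open>t \<in> W'\<close> \<open>s \<in> W'\<close> ts(2)] .
qed

lemma doubleton_eq_if_predecessor_top:
  assumes lin: "linear_order_on A R" and pred: "directly_above R s t"
    and W': "W' \<in> S2 A" and top: "\<forall>x\<in>W'. (t, x) \<in> R"
    and bot': "\<forall>x\<in>W'. (x, worst (swap_up R s) {t, s}) \<in> swap_up R s"
  shows "W' = {t, s}"
proof -
  note mem = mem_swap_up_iff[OF lin pred]
  have ts: "(t, s) \<in> R" "t \<noteq> s"
    and between: "\<And>w. (t, w) \<in> R \<Longrightarrow> (w, s) \<in> R \<Longrightarrow> w = t \<or> w = s"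
    using pred unfolding directly_above_def by auto
  have "(s, t) \<in> swap_up R s"
    using mem ts by (simp add: swp_def)
  moreover have "s \<in> A"
    using ts(1) linear_order_on_subset[OF lin] by blast
  ultimately have "worst (swap_up R s) {s, t} = t"
    using best_worst_doubleton(2)[OF linear_order_on_swap_up[OF lin]] by blast
  have "x \<in> {t, s}" if "x \<in> W'" for x
  proof (rule ccontr)
    assume "x \<notin> {t, s}"
    then have "swp s t x = x"
      by (simp add: swp_def)
    moreover have "(x, t) \<in> swap_up R s"
      using bot' that \<open>worst (swap_up R s) {s, t} = t\<close> by (simp add: insert_commute)
    ultimately have "(x, s) \<in> R"
      using mem ts(2) by (simp add: swp_def)
    then show False
      using between top that \<open>x \<notin> {t, s}\<close> by blast
  qed
  then show ?thesis
    using S2_eq_doubleton_if_subset[OF W'] by blast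
qed

lemma doubleton_eq_if_predecessor_between:
  assumes lin: "linear_order_on A R" and pred: "directly_above R s u" and "u \<noteq> t"
    and ts: "(t, s) \<in> R" "t \<noteq> s" and W': "W' \<in> S2 A"
    and top: "\<forall>x\<in>W'. (t, x) \<in> R" and bot: "\<exists>x\<in>W'. (s, x) \<in> R"
    and top': "\<exists>x\<in>W'. (x, best (swap_up R s) {t, s}) \<in> swap_up R s"
    and bot': "\<forall>x\<in>W'. (x, worst (swap_up R s) {t, s}) \<in> swap_up R s"
  shows "W' = {t, s}"
proof -
  note mem = mem_swap_up_iff[OF lin pred] and antisym = linear_order_on_antisym[OF lin]
  have us: "(u, s) \<in> R" "u \<noteq> s"
    using pred unfolding directly_above_def by auto
  have "s \<in> A"
    using ts(1) linear_order_on_subset[OF lin] by blast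
  have "(t, u) \<in> R"
    using lin pred ts by (rule directly_above_below)
  have swp: "swp s u s = u" "swp s u u = s" "swp s u t = t"
    using \<open>u \<noteq> t\<close> ts(2) by (auto simp: swp_def)
  have "(t, s) \<in> swap_up R s"
    using mem swp \<open>(t, u) \<in> R\<close> by simp
  note bw = best_worst_doubleton[OF linear_order_on_swap_up[OF lin \<open>s \<in> A\<close>] this]
  have up: "\<forall>x\<in>W'. (swp s u x, u) \<in> R"
    using bot' mem swp by (simp add: bw)
  have "u \<notin> W'"
  proof
    assume "u \<in> W'"
    then have "(s, u) \<in> R"
      using up swp by force
    then show False
      using antisym us by blast
  qed
  obtain x where x: "x \<in> W'" "(swp s u x, t) \<in> R"
    using top' mem swp by (auto simp: bw)
  have "x \<noteq> s"
  proof
    assume "x = s"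
    then have "(u, t) \<in> R"
      using x swp by simp
    then show False
      using antisym \<open>(t, u) \<in> R\<close> \<open>u \<noteq> t\<close> by blast
  qed
  then have "swp s u x = x"
    using x(1) \<open>u \<notin> W'\<close> by (auto simp: swp_def)
  then have "t \<in> W'"
    using x top antisym by metis
  obtain y where y: "y \<in> W'" "(s, y) \<in> R"
    using bot by blast
  have "s \<in> W'"
  proof (rule ccontr)
    assume "s \<notin> W'"
    then have "swp s u y = y"
      using y(1) \<open>u \<notin> W'\<close> by (auto simp: swp_def)
    then have "(y, u) \<in> R"
      using up y(1) by force
    then have "(s, u) \<in> R"
      using linear_order_on_trans[OF lin y(2)] by blast
    then show False
      using antisym us by blast
  qed
  show ?thesis
    using S2_eq_doubleton[OF W' \<open>t \<in> W'\<close> \<open>s \<in> W'\<close> ts(2)] .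
qed

lemma swap_up_outcome_eq:
  assumes lin: "linear_order_on A R" and ts: "(t, s) \<in> R" "t \<noteq> s" "s \<in> A"
    and W': "W' \<in> S2 A"
    and best_up: "(t, best R W') \<in> R" and worst_up: "(s, worst R W') \<in> R"
    and best_back: "(best (swap_up R s) W', best (swap_up R s) {t, s}) \<in> swap_up R s"
    and worst_back: "(worst (swap_up R s) W', worst (swap_up R s) {t, s}) \<in> swap_up R s"
  shows "W' = {t, s}"
proof -
  note lin' = linear_order_on_swap_up[OF lin \<open>s \<in> A\<close>]
  have top: "\<forall>x\<in>W'. (t, x) \<in> R"
    using best_up best_in_le(2)[OF lin S2_D[OF W']] linear_order_on_trans[OF lin] by blast
  have bot: "\<exists>x\<in>W'. (s, x) \<in> R"
    using worst_up worst_in_ge(1)[OF lin S2_D[OF W']] by blast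
  have top': "\<exists>x\<in>W'. (x, best (swap_up R s) {t, s}) \<in> swap_up R s"
    using best_back best_in_le(1)[OF lin' S2_D[OF W']] by blast
  have bot': "\<forall>x\<in>W'. (x, worst (swap_up R s) {t, s}) \<in> swap_up R s"
    using worst_back worst_in_ge(2)[OF lin' S2_D[OF W']] linear_order_on_trans[OF lin'] by blast
  consider "\<not> (\<exists>u. directly_above R s u)" | "directly_above R s t"
    | u where "directly_above R s u" "u \<noteq> t"
    by blast
  then show ?thesis
  proof cases
    case 1
    then show ?thesis
      using doubleton_eq_if_no_predecessor[OF lin _ ts(1,2) W' top bot top' bot'] by blast
  next
    case 2
    then show ?thesis
      using doubleton_eq_if_predecessor_top[OF lin _ W' top bot'] by blast
  next
    case 3
    then show ?thesis
      using doubleton_eq_if_predecessor_between[OF lin _ _ ts(1,2) W' top bot top' bot'] by blast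
  qed
qed

lemma profile_linear_order_on: "profile V A P \<Longrightarrow> i \<in> V \<Longrightarrow> linear_order_on A (P i)"
  by (simp add: profile_def)

lemma profile_update:
  "profile V A P \<Longrightarrow> i \<in> V \<Longrightarrow> linear_order_on A R \<Longrightarrow> profile V A (P(i := R))"
  by (auto simp: profile_def)

theorem lemma9:
  fixes V :: "'v set" and A :: "'a set" and F :: "('v \<Rightarrow> 'a rel) \<Rightarrow> 'a set"
  assumes "finite V" and "V \<noteq> {}" and "finite A"
    and "consular_rule V A F" and "SPO V A F" and "SPP V A F"
    and "profile V A P" and "i \<in> V"
  defines "W \<equiv> F P"
  defines "t \<equiv> best (P i) W"
  defines "s \<equiv> worst (P i) W"
  defines "W' \<equiv> F (profile_up P i s)"
  shows "best (swap_up (P i) s) W' \<in> {t, s} \<and> worst (swap_up (P i) s) W' \<in> {s, t}"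
proof -
  note rule = \<open>consular_rule V A F\<close> and prof = \<open>profile V A P\<close>
  let ?R' = "swap_up (P i) s"
  have lin: "linear_order_on A (P i)"
    using prof \<open>i \<in> V\<close> by (rule profile_linear_order_on)
  have W: "W \<in> S2 A"
    using rule prof unfolding consular_rule_def W_def by blast
  note ts = S2_eq_best_worst[OF lin W, folded t_def s_def]
  have "s \<in> A"
    using S2_D(3)[OF W] ts(1) by auto
  have lin': "linear_order_on A ?R'"
    using lin \<open>s \<in> A\<close> by (rule linear_order_on_swap_up)
  have prof': "profile V A (P(i := ?R'))"
    using prof \<open>i \<in> V\<close> lin' by (rule profile_update)
  have W'_eq: "W' = F (P(i := ?R'))"
    by (simp add: W'_def profile_up_def)
  have "W' = {t, s}"
  proof (rule swap_up_outcome_eq[OF lin ts(3,2) \<open>s \<in> A\<close>])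
    show "W' \<in> S2 A"
      using rule prof' unfolding consular_rule_def W'_eq by blast
    show "(t, best (P i) W') \<in> P i" "(s, worst (P i) W') \<in> P i"
      using \<open>SPO V A F\<close> \<open>SPP V A F\<close> prof \<open>i \<in> V\<close> lin'
      unfolding SPO_def SPP_def t_def s_def W_def W'_eq by blast+
    show "(best ?R' W', best ?R' {t, s}) \<in> ?R'" "(worst ?R' W', worst ?R' {t, s}) \<in> ?R'"
      using \<open>SPO V A F\<close> \<open>SPP V A F\<close> prof' \<open>i \<in> V\<close> lin
      unfolding SPO_def SPP_def W'_eq ts(1)[symmetric] W_def by fastforce+
  qed
  then show ?thesis
    using best_in_le(1)[OF lin' S2_D[OF W]] worst_in_ge(1)[OF lin' S2_D[OF W]] ts(1) by auto
qed

end
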